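(* For every integer $n\geq 1$, the empty graph $\overline{K_n}$ on $n$ vertices satisfies $\operatorname{th}_{\operatorname{H}}(\overline{K_n})=\lceil 2\sqrt{n}-1\rceil$.
   Context: All graphs are finite, simple and undirected. Hopping color change rule: a blue vertex $v$ may force a white vertex $w$ to become blue if $v$ has not previously performed a force and every neighbor of $v$ is blue. For an initial blue set $B$, a chronological list of forces of $B$ is a sequence of such forces applied one at a time until no further force is possible; its underlying unordered set is a set of forces of $B$. $B$ is a hopping forcing set if some chronological list of forces of $B$ turns all vertices blue. For a set of forces $\mathcal F$ of $B$, let $\mathcal F^{(0)}=B$ and for $t\geq1$ let $\mathcal F^{(t)}$ be the set of vertices $w\notin U_{t-1}:=\bigcup_{i=0}^{t-1}\mathcal F^{(i)}$ for which there is $(v\to w)\in\mathcal F$ with $v\in U_{t-1}$ and all neighbors of $v$ in $U_{t-1}$. $\operatorname{pt}_{\operatorname{H}}(G;\mathcal F)$ is the least $t$ with $\bigcup_{i=0}^t\mathcal F^{(i)}=V(G)$ ($\infty$ if none); $\operatorname{pt}_{\operatorname{H}}(G;B)$ is the minimum of $\operatorname{pt}_{\operatorname{H}}(G;\mathcal F)$ over sets of forces $\mathcal F$ of $B$ ($\infty$ if $B$ is not a hopping forcing set). $\operatorname{th}_{\operatorname{H}}(G)=\min_{B\subseteq V(G)}\big(|B|+\operatorname{pt}_{\operatorname{H}}(G;B)\big)$. *)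

theory Defs
  imports Complex_Main "HOL-Library.Extended_Nat"
begin

text \<open>A finite simple graph is given by a vertex set V and an edge relation E
(assumed symmetric and irreflexive where needed).  A force is a pair (v, w)
meaning v forces w.\<close>

definition hop_chron_valid :: "'a set \<Rightarrow> ('a \<Rightarrow> 'a \<Rightarrow> bool) \<Rightarrow> 'a set \<Rightarrow> ('a \<times> 'a) list \<Rightarrow> bool" where
  "hop_chron_valid V E B fs \<longleftrightarrow>
     (\<forall>i < length fs.
        let v = fst (fs ! i); w = snd (fs ! i); U = B \<union> snd ` set (take i fs) in
          v \<in> V \<and> v \<in> U \<and> w \<in> V \<and> w \<notin> U \<and> v \<notin> fst ` set (take i fs) \<and>
          (\<forall>u \<in> V. E v u \<longrightarrow> u \<in> U))"

definition hop_chron_list :: "'a set \<Rightarrow> ('a \<Rightarrow> 'a \<Rightarrow> bool) \<Rightarrow> 'a set \<Rightarrow> ('a \<times> 'a) list \<Rightarrow> bool" where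
  "hop_chron_list V E B fs \<longleftrightarrow>
     hop_chron_valid V E B fs \<and> \<not> (\<exists>v w. hop_chron_valid V E B (fs @ [(v, w)]))"

definition hop_force_sets :: "'a set \<Rightarrow> ('a \<Rightarrow> 'a \<Rightarrow> bool) \<Rightarrow> 'a set \<Rightarrow> ('a \<times> 'a) set set" where
  "hop_force_sets V E B = {set fs | fs. hop_chron_list V E B fs}"

definition hopping_forcing_set :: "'a set \<Rightarrow> ('a \<Rightarrow> 'a \<Rightarrow> bool) \<Rightarrow> 'a set \<Rightarrow> bool" where
  "hopping_forcing_set V E B \<longleftrightarrow> B \<subseteq> V \<and>
     (\<exists>fs. hop_chron_list V E B fs \<and> B \<union> snd ` set fs = V)"

fun hop_blue :: "'a set \<Rightarrow> ('a \<Rightarrow> 'a \<Rightarrow> bool) \<Rightarrow> 'a set \<Rightarrow> ('a \<times> 'a) set \<Rightarrow> nat \<Rightarrow> 'a set" where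
  "hop_blue V E B F 0 = B"
| "hop_blue V E B F (Suc t) =
     hop_blue V E B F t \<union>
     {w. w \<notin> hop_blue V E B F t \<and>
         (\<exists>v. (v, w) \<in> F \<and> v \<in> hop_blue V E B F t \<and>
              (\<forall>u \<in> V. E v u \<longrightarrow> u \<in> hop_blue V E B F t))}"

definition pt_hop_forces :: "'a set \<Rightarrow> ('a \<Rightarrow> 'a \<Rightarrow> bool) \<Rightarrow> 'a set \<Rightarrow> ('a \<times> 'a) set \<Rightarrow> enat" where
  "pt_hop_forces V E B F =
     (if \<exists>t. hop_blue V E B F t = V then enat (LEAST t. hop_blue V E B F t = V) else \<infinity>)"

definition pt_hop :: "'a set \<Rightarrow> ('a \<Rightarrow> 'a \<Rightarrow> bool) \<Rightarrow> 'a set \<Rightarrow> enat" where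
  "pt_hop V E B =
     (if hopping_forcing_set V E B
      then (INF F \<in> hop_force_sets V E B. pt_hop_forces V E B F) else \<infinity>)"

definition th_hop :: "'a set \<Rightarrow> ('a \<Rightarrow> 'a \<Rightarrow> bool) \<Rightarrow> enat" where
  "th_hop V E = (INF B \<in> Pow V. enat (card B) + pt_hop V E B)"

end

theory Submission
  imports Defs
begin

text \<open>The forces of a chronological list have pairwise distinct sources, and a vertex that
is blue after t + 1 rounds lies in B or is forced by a vertex blue after t rounds. So in any
graph at most |B|(t + 1) vertices are blue after t rounds, and covering n vertices needs
|B| + t \<ge> 2\<surd>n - 1 by AM-GM. Conversely, in the empty graph every blue vertex may force
at once: from B = {0..<a} the forces j \<rightarrow> j + a colour {0..<a(t + 1)} after t rounds, and
a \<approx> \<surd>n with the matching number of rounds attains the bound.\<close>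

lemma card_Image_le:
  assumes "inj_on fst F" "finite A"
  shows "card (F `` A) \<le> card A"
proof -
  let ?G = "F \<inter> (A \<times> UNIV)"
  have inj: "inj_on fst ?G" using assms(1) by (rule inj_on_subset) auto
  have sub: "fst ` ?G \<subseteq> A" by auto
  have fin: "finite ?G" using finite_imageD[OF finite_subset[OF sub assms(2)] inj] .
  have "F `` A = snd ` ?G" by force
  hence "card (F `` A) \<le> card ?G" using card_image_le[OF fin] by simp
  also have "card ?G = card (fst ` ?G)" using card_image[OF inj] by simp
  also have "\<dots> \<le> card A" using card_mono[OF assms(2) sub] .
  finally show ?thesis .
qed

lemma hop_blue_mono_Suc: "hop_blue V E B F t \<subseteq> hop_blue V E B F (Suc t)"
  by auto

lemma hop_blue_subset_Image: "hop_blue V E B F t \<subseteq> B \<union> F `` hop_blue V E B F t"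
proof (induction t)
  case 0
  then show ?case by simp
next
  case (Suc t)
  have "F `` hop_blue V E B F t \<subseteq> F `` hop_blue V E B F (Suc t)"
    using hop_blue_mono_Suc by (rule Image_mono[OF order_refl])
  with Suc.IH show ?case
    using hop_blue_mono_Suc[of V E B F t] by auto
qed

lemma hop_blue_Suc_subset: "hop_blue V E B F (Suc t) \<subseteq> B \<union> F `` hop_blue V E B F t"
  using hop_blue_subset_Image[of V E B F t] by auto

lemma finite_hop_blue: "finite B \<Longrightarrow> finite F \<Longrightarrow> finite (hop_blue V E B F t)"
proof (induction t)
  case 0
  then show ?case by simp
next
  case (Suc t)
  have "hop_blue V E B F (Suc t) \<subseteq> hop_blue V E B F t \<union> snd ` F" by force
  then show ?case using Suc finite_subset by blast
qed

lemma card_hop_blue_le: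
  assumes "inj_on fst F" "finite B" "finite F"
  shows "card (hop_blue V E B F t) \<le> card B * (t + 1)"
proof (induction t)
  case 0
  then show ?case by simp
next
  case (Suc t)
  let ?U = "hop_blue V E B F t"
  have "finite (F `` ?U)"
    by (rule finite_subset[of _ "snd ` F"]) (use assms(3) in force)+
  then have "card (hop_blue V E B F (Suc t)) \<le> card (B \<union> F `` ?U)"
    using assms(2) by (intro card_mono[OF _ hop_blue_Suc_subset]) simp
  also have "\<dots> \<le> card B + card (F `` ?U)" by (rule card_Un_le)
  also have "\<dots> \<le> card B + card ?U"
    using card_Image_le[OF assms(1) finite_hop_blue[OF assms(2,3)]] by simp
  also have "\<dots> \<le> card B * (Suc t + 1)" using Suc by simp
  finally show ?case .
qed

lemma hop_chron_valid_distinct_fst: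
  assumes "hop_chron_valid V E B fs"
  shows "distinct (map fst fs)"
proof -
  have "fst (fs ! i) \<noteq> fst (fs ! j)" if "i < j" "j < length fs" for i j
  proof -
    have "fs ! i \<in> set (take j fs)"
      using that by (metis in_set_conv_nth length_take min.absorb4 nth_take order.strict_trans)
    moreover have "fst (fs ! j) \<notin> fst ` set (take j fs)"
      using assms that unfolding hop_chron_valid_def Let_def by blast
    ultimately show ?thesis by (metis image_eqI)
  qed
  then show ?thesis
    unfolding distinct_conv_nth by (metis length_map linorder_neqE_nat nth_map)
qed

lemma hop_chron_valid_snd_subset:
  assumes "hop_chron_valid V E B fs"
  shows "snd ` set fs \<subseteq> V"
proof
  fix w assume "w \<in> snd ` set fs"
  then obtain i where "i < length fs" "w = snd (fs ! i)"
    by (auto simp: in_set_conv_nth)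
  with assms show "w \<in> V"
    unfolding hop_chron_valid_def Let_def by blast
qed

lemma card_le_of_hop_blue_eq:
  assumes "finite V" "B \<subseteq> V" "F \<in> hop_force_sets V E B" "hop_blue V E B F t = V"
  shows "card V \<le> card B * (t + 1)"
proof -
  obtain fs where F: "F = set fs" "hop_chron_list V E B fs"
    using assms(3) unfolding hop_force_sets_def by blast
  then have "inj_on fst F"
    using hop_chron_valid_distinct_fst by (auto simp: hop_chron_list_def distinct_map)
  then show ?thesis
    using card_hop_blue_le[of F B V E t] assms finite_subset F(1) by auto
qed

lemma ceiling_two_sqrt_le_sum:
  fixes n b t :: nat
  assumes "n \<le> b * (t + 1)"
  shows "nat \<lceil>2 * sqrt (real n) - 1\<rceil> \<le> b + t"
proof -
  have "real n \<le> real b * (real t + 1)"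
    using of_nat_mono[OF assms] by (simp add: algebra_simps)
  then have "sqrt (real n) \<le> sqrt (real b * (real t + 1))" by simp
  moreover have "(2 * sqrt (real b * (real t + 1)))\<^sup>2 \<le> (real b + real t + 1)\<^sup>2"
    \<comment> \<open>AM-GM, as \<open>(b - (t + 1))\<^sup>2 \<ge> 0\<close>\<close>
    using sum_squares_ge_zero[of "real b - real t - 1" 0]
    by (simp add: power_mult_distrib power2_eq_square algebra_simps)
  then have "2 * sqrt (real b * (real t + 1)) \<le> real b + real t + 1"
    by (rule power2_le_imp_le) simp
  ultimately have "2 * sqrt (real n) - 1 \<le> real b + real t" by linarith
  then have "\<lceil>2 * sqrt (real n) - 1\<rceil> \<le> int (b + t)" by (intro ceiling_le) simp
  then show ?thesis by simp
qed

lemma th_hop_ge_ceiling_sqrt: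
  assumes "finite V"
  shows "enat (nat \<lceil>2 * sqrt (real (card V)) - 1\<rceil>) \<le> th_hop V E"
  unfolding th_hop_def
proof (rule INF_greatest)
  define T where "T = nat \<lceil>2 * sqrt (real (card V)) - 1\<rceil>"
  fix B assume "B \<in> Pow V"
  then have B: "B \<subseteq> V" by blast
  have "enat (T - card B) \<le> pt_hop_forces V E B F" if F: "F \<in> hop_force_sets V E B" for F
  proof (cases "\<exists>t. hop_blue V E B F t = V")
    case True
    let ?t = "LEAST t. hop_blue V E B F t = V"
    have "hop_blue V E B F ?t = V" using True by (rule LeastI_ex)
    then have "card V \<le> card B * (?t + 1)"
      by (rule card_le_of_hop_blue_eq[OF assms B F])
    then have "T \<le> card B + ?t" unfolding T_def by (rule ceiling_two_sqrt_le_sum)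
    then show ?thesis unfolding pt_hop_forces_def using True by simp
  qed (simp add: pt_hop_forces_def)
  then have "enat (T - card B) \<le> pt_hop V E B"
    unfolding pt_hop_def by (auto intro: INF_greatest)
  then have "enat (card B) + enat (T - card B) \<le> enat (card B) + pt_hop V E B"
    by (rule add_left_mono)
  then show "enat T \<le> enat (card B) + pt_hop V E B"
    by (rule order_trans[rotated]) simp
qed

lemma th_hop_le:
  assumes "B \<subseteq> V" "hop_chron_list V E B fs" "hop_blue V E B (set fs) t = V"
  shows "th_hop V E \<le> enat (card B + t)"
proof -
  have "snd ` set fs \<subseteq> V"
    using assms(2) hop_chron_valid_snd_subset unfolding hop_chron_list_def by blast
  moreover have "V \<subseteq> B \<union> snd ` set fs"
    using hop_blue_subset_Image[of V E B "set fs" t] assms(3) by force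
  ultimately have "B \<union> snd ` set fs = V" using assms(1) by blast
  then have "hopping_forcing_set V E B"
    unfolding hopping_forcing_set_def using assms(1,2) by blast
  moreover have "set fs \<in> hop_force_sets V E B"
    unfolding hop_force_sets_def using assms(2) by blast
  moreover have "pt_hop_forces V E B (set fs) \<le> enat t"
    unfolding pt_hop_forces_def using assms(3) by (auto intro: Least_le)
  ultimately have "pt_hop V E B \<le> enat t"
    unfolding pt_hop_def by (auto intro: INF_lower2)
  then have "enat (card B) + pt_hop V E B \<le> enat (card B + t)"
    by (metis add_left_mono plus_enat_simps(1))
  then show ?thesis
    unfolding th_hop_def using assms(1) by (auto intro: INF_lower2)
qed

definition shift_forces :: "nat \<Rightarrow> nat \<Rightarrow> (nat \<times> nat) list" where
  "shift_forces n a = map (\<lambda>j. (j, j + a)) [0..<n - a]"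

lemma set_take_shift_forces:
  "i \<le> n - a \<Longrightarrow> set (take i (shift_forces n a)) = (\<lambda>j. (j, j + a)) ` {0..<i}"
  unfolding shift_forces_def by (simp add: take_map min_def)

lemma snd_image_shift: "snd ` (\<lambda>j. (j, j + a)) ` {0..<k} = {a..<k + (a::nat)}"
  by (auto simp: image_image image_iff intro!: bexI[where x = "_ - a"])

lemma hop_chron_list_shift_forces:
  assumes "1 \<le> a" "a \<le> n"
  shows "hop_chron_list {0..<n} (\<lambda>_ _. False) {0..<a} (shift_forces n a)"
proof -
  have blue_before: "{0..<a} \<union> snd ` set (take i (shift_forces n a)) = {0..<i + a}"
    if "i \<le> n - a" for i
    using that by (auto simp: set_take_shift_forces snd_image_shift)
  have forced_before: "fst ` set (take i (shift_forces n a)) = {0..<i}" if "i \<le> n - a" for i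
    using that by (simp add: set_take_shift_forces image_image)
  have "hop_chron_valid {0..<n} (\<lambda>_ _. False) {0..<a} (shift_forces n a)"
    unfolding hop_chron_valid_def Let_def
    using assms blue_before forced_before
    by (auto simp: shift_forces_def)
  moreover have "\<not> hop_chron_valid {0..<n} (\<lambda>_ _. False) {0..<a} (shift_forces n a @ [(v, w)])"
    for v w
  proof
    let ?i = "length (shift_forces n a)"
    assume valid: "hop_chron_valid {0..<n} (\<lambda>_ _. False) {0..<a} (shift_forces n a @ [(v, w)])"
    have "?i < length (shift_forces n a @ [(v, w)])" by simp
    from valid[unfolded hop_chron_valid_def Let_def, rule_format, OF this]
    have "w \<in> {0..<n} \<and> w \<notin> {0..<a} \<union> snd ` set (shift_forces n a)" by simp
    moreover have "{0..<a} \<union> snd ` set (shift_forces n a) = {0..<n}"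
      using blue_before[of "n - a"] assms by (simp add: shift_forces_def)
    ultimately show False by simp
  qed
  ultimately show ?thesis unfolding hop_chron_list_def by blast
qed

lemma mem_shift_forces_iff: "(v, w) \<in> set (shift_forces n a) \<longleftrightarrow> v < n - a \<and> w = v + a"
  unfolding shift_forces_def by auto

lemma hop_blue_shift_forces:
  assumes "a \<le> n"
  shows "hop_blue {0..<n} (\<lambda>_ _. False) {0..<a} (set (shift_forces n a)) t
    = {0..<min n (a * (t + 1))}"
proof (induction t)
  case 0
  show ?case using assms by auto
next
  case (Suc t)
  have "x \<in> hop_blue {0..<n} (\<lambda>_ _. False) {0..<a} (set (shift_forces n a)) (Suc t)"
    if "x < n" "a * (t + 1) \<le> x" "x < a * (t + 2)" for x
  proof -
    have "x - a < a * (t + 1)" "a \<le> x" using that by (auto simp: algebra_simps)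
    then have "(x - a, x) \<in> set (shift_forces n a)" "x - a < min n (a * (t + 1))"
      using that by (auto simp: mem_shift_forces_iff)
    then show ?thesis using that Suc.IH by auto
  qed
  then show ?case
    using Suc.IH by (fastforce simp: mem_shift_forces_iff algebra_simps)
qed

lemma th_hop_empty_graph_le:
  assumes "1 \<le> a" "a \<le> n" "n \<le> a * c"
  shows "th_hop {0..<n} (\<lambda>_ _. False) \<le> enat (a + c - 1)"
proof -
  have "c - 1 + 1 = c" using assms by (cases c) auto
  then have "hop_blue {0..<n} (\<lambda>_ _. False) {0..<a} (set (shift_forces n a)) (c - 1) = {0..<n}"
    unfolding hop_blue_shift_forces[OF assms(2)] using assms(3) by (simp add: min_def)
  then have "th_hop {0..<n} (\<lambda>_ _. False) \<le> enat (card {0..<a} + (c - 1))"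
    using assms by (intro th_hop_le[OF _ hop_chron_list_shift_forces]) auto
  also have "\<dots> = enat (a + c - 1)" using assms by (cases c) auto
  finally show ?thesis .
qed

lemma le_mul_of_four_mul_le_square:
  fixes n m :: nat
  assumes "4 * n \<le> m * m"
  shows "n \<le> (m div 2) * (m - m div 2)"
proof -
  define a r where "a = m div 2" and "r = m mod 2"
  have "m = 2 * a + r" "m - a = a + r" "r * r = r"
    unfolding a_def r_def by (presburger, presburger, cases "even m") auto
  then have "m * m = 4 * (a * (m - a)) + r" by (simp add: algebra_simps)
  moreover have "r \<le> 1" unfolding r_def by simp
  ultimately show ?thesis using assms unfolding a_def by linarith
qed

lemma ceiling_two_sqrt_minus_one_bounds:
  fixes n :: nat
  assumes "1 \<le> n"
  defines "T \<equiv> nat \<lceil>2 * sqrt (real n) - 1\<rceil>"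
  shows "1 \<le> T" "T < 2 * n" "4 * n \<le> (T + 1) * (T + 1)"
proof -
  have sqrt_ge: "1 \<le> sqrt (real n)" using assms by simp
  have "sqrt (real n) \<le> real n"
    using sqrt_ge real_sqrt_le_iff[of n "n * n"] by (simp add: real_sqrt_mult)
  have "real T = of_int \<lceil>2 * sqrt (real n) - 1\<rceil>"
    unfolding T_def using sqrt_ge by (intro of_nat_nat) linarith
  then have lower: "2 * sqrt (real n) \<le> real T + 1" and upper: "real T < 2 * sqrt (real n)"
    using ceiling_correct[of "2 * sqrt (real n) - 1"] by linarith+
  show "1 \<le> T" using lower sqrt_ge by linarith
  show "T < 2 * n" using upper \<open>sqrt (real n) \<le> real n\<close> by linarith
  have "(2 * sqrt (real n))\<^sup>2 \<le> (real T + 1)\<^sup>2"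
    using lower sqrt_ge by (intro power_mono) auto
  then have "4 * real n \<le> (real T + 1)\<^sup>2" by (simp add: power_mult_distrib)
  then have "real (4 * n) \<le> real ((T + 1) * (T + 1))"
    by (simp add: power2_eq_square algebra_simps)
  then show "4 * n \<le> (T + 1) * (T + 1)" by (simp only: of_nat_le_iff)
qed

theorem proposition3p4:
  fixes n :: nat
  assumes "n \<ge> 1"
  shows "th_hop {0..<n} (\<lambda>_ _. False) = enat (nat \<lceil>2 * sqrt (real n) - 1\<rceil>)"
proof (rule antisym)
  define T where "T = nat \<lceil>2 * sqrt (real n) - 1\<rceil>"
  define a where "a = (T + 1) div 2"
  have T: "1 \<le> T" "T < 2 * n" "4 * n \<le> (T + 1) * (T + 1)"
    using ceiling_two_sqrt_minus_one_bounds[OF assms] unfolding T_def by auto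
  then have "n \<le> a * (T + 1 - a)" "1 \<le> a" "a \<le> n"
    unfolding a_def using le_mul_of_four_mul_le_square[OF T(3)] by auto
  then have "th_hop {0..<n} (\<lambda>_ _. False) \<le> enat (a + (T + 1 - a) - 1)"
    by (intro th_hop_empty_graph_le)
  also have "a + (T + 1 - a) - 1 = T" unfolding a_def by simp
  finally show "th_hop {0..<n} (\<lambda>_ _. False) \<le> enat T" .
  show "enat T \<le> th_hop {0..<n} (\<lambda>_ _. False)"
    using th_hop_ge_ceiling_sqrt[of "{0..<n}"] unfolding T_def by simp
qed

end
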